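(* Let $v\ge2$, $\epsilon>0$, and let $0\le k_1<k_2\le v$ be integers with $(k_1,k_2)\neq(0,v)$. Then $L(v,k_1,\epsilon)\le L(v,k_2,\epsilon)$ if and only if $e^\epsilon\ge E(k_1,k_2;v)$.
   Context: For $1\le k\le v-1$, $L(v,k,\epsilon)=\frac{(ke^\epsilon+v-k)^2}{k(v-k)}$, and $L(v,0,\epsilon)=L(v,v,\epsilon)=\infty$. For $0\le k_1<k_2\le v$ with $(k_1,k_2)\neq(0,v)$: $E(k_1,k_2;v)=\sqrt{\frac{(v-k_1)(v-k_2)}{k_1k_2}}$ if $k_1\ge1$ (so $E(k_1,v;v)=0$), and $E(0,k_2;v)=\infty$. *)

theory Defs
  imports Complex_Main "HOL-Library.Extended_Real"
begin

definition L :: "nat \<Rightarrow> nat \<Rightarrow> real \<Rightarrow> ereal" where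
  "L v k eps = (if k = 0 \<or> k = v then \<infinity>
     else ereal ((real k * exp eps + real v - real k)^2 / (real k * (real v - real k))))"

definition E :: "nat \<Rightarrow> nat \<Rightarrow> nat \<Rightarrow> ereal" where
  "E k1 k2 v = (if k1 = 0 then \<infinity>
     else ereal (sqrt ((real v - real k1) * (real v - real k2) / (real k1 * real k2))))"

end

theory Submission
  imports Defs
begin

text \<open>With \<open>x = e\<^sup>\<epsilon>\<close>, the difference \<open>L(v,k\<^sub>2,\<epsilon>) - L(v,k\<^sub>1,\<epsilon>)\<close> for
  \<open>1 \<le> k\<^sub>1 < k\<^sub>2 \<le> v - 1\<close> factors as
  \<open>v (k\<^sub>2 - k\<^sub>1) (k\<^sub>1 k\<^sub>2 x\<^sup>2 - (v - k\<^sub>1)(v - k\<^sub>2)) / (k\<^sub>1 k\<^sub>2 (v - k\<^sub>1)(v - k\<^sub>2))\<close>,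
  so its sign is that of \<open>x\<^sup>2 - E(k\<^sub>1,k\<^sub>2;v)\<^sup>2\<close>. The boundary cases \<open>k\<^sub>1 = 0\<close>
  and \<open>k\<^sub>2 = v\<close> are settled by the infinite value of \<open>L\<close> and by \<open>E(k\<^sub>1,v;v) = 0\<close>.\<close>

lemma square_ratio_diff_eq:
  fixes a b w x :: real
  assumes "a \<noteq> 0" "b \<noteq> 0" "w \<noteq> a" "w \<noteq> b"
  shows "(b*x + w - b)^2 / (b*(w - b)) - (a*x + w - a)^2 / (a*(w - a))
    = w*(b - a)*(a*b*x^2 - (w - a)*(w - b)) / (a*b*(w - a)*(w - b))"
  using assms by (simp add: field_simps) (simp add: algebra_simps power2_eq_square)

lemma square_ratio_le_iff:
  fixes a b w x :: real
  assumes "0 < a" "a < b" "b < w" "0 \<le> x"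
  shows "(a*x + w - a)^2 / (a*(w - a)) \<le> (b*x + w - b)^2 / (b*(w - b))
     \<longleftrightarrow> sqrt ((w - a)*(w - b)/(a*b)) \<le> x"
proof -
  have "(a*x + w - a)^2 / (a*(w - a)) \<le> (b*x + w - b)^2 / (b*(w - b))
     \<longleftrightarrow> 0 \<le> w*(b - a)*(a*b*x^2 - (w - a)*(w - b)) / (a*b*(w - a)*(w - b))"
    using square_ratio_diff_eq[of a b w x] assms by force
  also have "\<dots> \<longleftrightarrow> 0 \<le> a*b*x^2 - (w - a)*(w - b)"
  proof -
    have "0 < w*(b - a) / (a*b*(w - a)*(w - b))"
      using assms by simp
    moreover have "w*(b - a)*(a*b*x^2 - (w - a)*(w - b)) / (a*b*(w - a)*(w - b))
      = w*(b - a) / (a*b*(w - a)*(w - b)) * (a*b*x^2 - (w - a)*(w - b))"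
      by simp
    ultimately show ?thesis
      by (simp only: zero_le_mult_iff) linarith
  qed
  also have "\<dots> \<longleftrightarrow> (w - a)*(w - b)/(a*b) \<le> x^2"
    using assms by (simp add: pos_divide_le_eq mult.commute)
  also have "\<dots> \<longleftrightarrow> sqrt ((w - a)*(w - b)/(a*b)) \<le> x"
    using assms(4) real_le_lsqrt sqrt_le_D by blast
  finally show ?thesis .
qed

theorem lemma2:
  fixes v k1 k2 :: nat and eps :: real
  assumes "v \<ge> 2" and "eps > 0"
    and "k1 < k2" and "k2 \<le> v"
    and "\<not> (k1 = 0 \<and> k2 = v)"
  shows "L v k1 eps \<le> L v k2 eps \<longleftrightarrow> ereal (exp eps) \<ge> E k1 k2 v"
proof -
  consider "k1 = 0" "k2 < v" | "0 < k1" "k2 = v" | "0 < k1" "k2 < v"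
    using assms by linarith
  then show ?thesis
  proof cases
    case 1
    then show ?thesis using assms by (simp add: L_def E_def)
  next
    case 2
    then show ?thesis using assms by (simp add: L_def E_def)
  next
    case 3
    then show ?thesis
      using assms square_ratio_le_iff[of "real k1" "real k2" "real v" "exp eps"]
      by (simp add: L_def E_def)
  qed
qed

end
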